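(* For every graph $G$ with $n$ vertices, $P(G,m)-P_{DP}(G,m)=O(m^{n-2})$ as $m\to\infty$.
   Context: All graphs are finite and simple. $P(G,m)$ denotes the chromatic polynomial of $G$. A cover of a graph $G$ is a pair $\mathcal{H}=(L,H)$ where $H$ is a graph and $L:V(G)\to\mathcal{P}(V(H))$ satisfies: (1) the sets $L(u)$, $u\in V(G)$, partition $V(H)$; (2) for every $u$, $H[L(u)]$ is complete; (3) if $E_H(L(u),L(v))\neq\emptyset$ then $u=v$ or $uv\in E(G)$; (4) if $uv\in E(G)$ then $E_H(L(u),L(v))$ is a matching (possibly empty). Here $E_H(S,U)$ is the set of edges of $H$ between $S$ and $U$. The cover is $m$-fold if $|L(u)|=m$ for all $u$. An $\mathcal{H}$-coloring is an independent set of $H$ of size $|V(G)|$. $P_{DP}(G,\mathcal{H})$ is the number of $\mathcal{H}$-colorings, and $P_{DP}(G,m)$ is the minimum of $P_{DP}(G,\mathcal{H})$ over all $m$-fold covers $\mathcal{H}$ of $G$. *)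

theory Defs
  imports Main "HOL-Library.FuncSet" "HOL-Library.Landau_Symbols"
begin

definition simple_graph :: "'a set \<Rightarrow> ('a \<times> 'a) set \<Rightarrow> bool" where
  "simple_graph V E \<longleftrightarrow> finite V \<and> E \<subseteq> V \<times> V \<and> sym E \<and> irrefl E"

definition chrom_poly :: "'a set \<Rightarrow> ('a \<times> 'a) set \<Rightarrow> nat \<Rightarrow> nat" where
  "chrom_poly V E m = card {f. f \<in> V \<rightarrow>\<^sub>E {0..<m} \<and> (\<forall>(u,v)\<in>E. f u \<noteq> f v)}"

definition edges_between :: "('b \<times> 'b) set \<Rightarrow> 'b set \<Rightarrow> 'b set \<Rightarrow> ('b \<times> 'b) set" where
  "edges_between EH S U = {(x,y). (x,y) \<in> EH \<and> x \<in> S \<and> y \<in> U}"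

definition is_cover ::
  "'a set \<Rightarrow> ('a \<times> 'a) set \<Rightarrow> ('a \<Rightarrow> 'b set) \<Rightarrow> 'b set \<Rightarrow> ('b \<times> 'b) set \<Rightarrow> bool" where
  "is_cover V E L VH EH \<longleftrightarrow>
     simple_graph VH EH \<and>
     \<comment> \<open>(1) the sets L(u), u in V(G), partition V(H)\<close>
     (\<Union>u\<in>V. L u) = VH \<and>
     (\<forall>u\<in>V. \<forall>v\<in>V. u \<noteq> v \<longrightarrow> L u \<inter> L v = {}) \<and>
     \<comment> \<open>(2) each H[L(u)] is complete\<close>
     (\<forall>u\<in>V. \<forall>x\<in>L u. \<forall>y\<in>L u. x \<noteq> y \<longrightarrow> (x,y) \<in> EH) \<and>
     \<comment> \<open>(3) edges between L(u), L(v) only if u = v or uv in E(G)\<close>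
     (\<forall>u\<in>V. \<forall>v\<in>V. edges_between EH (L u) (L v) \<noteq> {} \<longrightarrow> u = v \<or> (u,v) \<in> E) \<and>
     \<comment> \<open>(4) for uv in E(G), the edges between L(u), L(v) form a matching\<close>
     (\<forall>(u,v)\<in>E. \<forall>(x1,y1)\<in>edges_between EH (L u) (L v). \<forall>(x2,y2)\<in>edges_between EH (L u) (L v).
         (x1 = x2 \<longleftrightarrow> y1 = y2))"

definition is_m_fold_cover ::
  "'a set \<Rightarrow> ('a \<times> 'a) set \<Rightarrow> nat \<Rightarrow> ('a \<Rightarrow> 'b set) \<Rightarrow> 'b set \<Rightarrow> ('b \<times> 'b) set \<Rightarrow> bool" where
  "is_m_fold_cover V E m L VH EH \<longleftrightarrow> is_cover V E L VH EH \<and> (\<forall>u\<in>V. card (L u) = m)"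

definition P_DP_cover :: "'a set \<Rightarrow> 'b set \<Rightarrow> ('b \<times> 'b) set \<Rightarrow> nat" where
  "P_DP_cover V VH EH =
     card {I. I \<subseteq> VH \<and> (\<forall>x\<in>I. \<forall>y\<in>I. (x,y) \<notin> EH) \<and> card I = card V}"

text \<open>Every (finite) cover is
isomorphic to one whose cover graph has vertices in the countably infinite type
'a \<times> nat, so minimizing over covers with that vertex type loses nothing.\<close>
definition P_DP :: "'a set \<Rightarrow> ('a \<times> 'a) set \<Rightarrow> nat \<Rightarrow> nat" where
  "P_DP V E m = Inf {P_DP_cover V VH EH | (L :: 'a \<Rightarrow> ('a \<times> nat) set) VH EH.
                       is_m_fold_cover V E m L VH EH}"

end

theory Submission
  imports Defs
begin

text \<open>With \<open>n = |V|\<close> and \<open>e\<close> the number of edges, both colour counts are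
  \<open>m^n - e m^(n-1) + O(m^(n-2))\<close>. A map \<open>V \<rightarrow> {0..<m}\<close> fails to be a proper colouring iff it is
  monochromatic on some edge; there are exactly \<open>m^(n-1)\<close> maps monochromatic on a given edge
  and at most \<open>m^(n-2)\<close> on two given edges, so Bonferroni's inequality gives
  \<open>P(G,m) \<le> m^n - e m^(n-1) + e^2 m^(n-2)\<close>. In an \<open>m\<close>-fold cover the \<open>H\<close>-colourings are the
  choice functions \<open>u \<mapsto> f u \<in> L u\<close> with no conflicting pair, and since the edges between
  \<open>L u\<close> and \<open>L v\<close> form a matching, at most \<open>m^(n-1)\<close> choices conflict along a given edge;
  the union bound gives \<open>P_DP(G,m) \<ge> m^n - e m^(n-1)\<close>. Finally \<open>P_DP(G,m) \<le> P(G,m)\<close> via the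
  cover whose colourings are the proper colourings, so \<open>0 \<le> P - P_DP \<le> e^2 m^(n-2)\<close>.\<close>

section \<open>Elementary counting\<close>

lemma inj_on_restrict_PiE: "S \<subseteq> PiE V L \<Longrightarrow> inj_on (\<lambda>f. restrict f V) S"
  by (rule inj_onI) (metis PiE_restrict subsetD)

lemma inj_on_restrict_Diff_singleton:
  assumes inj: "inj_on (\<lambda>f. restrict f W) S" and b: "b \<in> W" "b \<noteq> a"
    and det: "\<And>f g. f \<in> S \<Longrightarrow> g \<in> S \<Longrightarrow> f b = g b \<Longrightarrow> f a = g a"
  shows "inj_on (\<lambda>f. restrict f (W - {a})) S"
proof (rule inj_onI)
  fix f g assume f: "f \<in> S" and g: "g \<in> S"
    and eq: "restrict f (W - {a}) = restrict g (W - {a})"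
  then have agree: "f x = g x" if "x \<in> W - {a}" for x
    using that by (metis restrict_apply')
  then have "f a = g a" using det f g b by simp
  with agree have "restrict f W = restrict g W" by (intro restrict_ext) blast
  then show "f = g" using inj f g by (auto dest: inj_onD)
qed

lemma card_le_prod_card_if_inj_on_restrict:
  assumes S: "S \<subseteq> PiE V L" and W: "W \<subseteq> V" "finite W" and fin: "\<And>a. a \<in> W \<Longrightarrow> finite (L a)"
    and inj: "inj_on (\<lambda>f. restrict f W) S"
  shows "card S \<le> (\<Prod>a\<in>W. card (L a))"
proof -
  have "card S \<le> card (PiE W L)"
  proof (rule card_inj_on_le[OF inj])
    show "(\<lambda>f. restrict f W) ` S \<subseteq> PiE W L" using S W by (fastforce simp: PiE_iff)
    show "finite (PiE W L)" using W fin by (intro finite_PiE) auto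
  qed
  then show ?thesis using W by (simp add: card_PiE)
qed

lemma card_PiE_diagonal_ge:
  assumes "finite V" "finite M" "u \<in> V" "v \<in> V" "u \<noteq> v"
  shows "card M ^ (card V - 1) \<le> card {f \<in> PiE V (\<lambda>_. M). f u = f v}"
proof -
  let ?extend = "\<lambda>g. g(v := g u)"
  have "card (PiE (V - {v}) (\<lambda>_. M)) \<le> card {f \<in> PiE V (\<lambda>_. M). f u = f v}"
  proof (rule card_inj_on_le)
    have "restrict (?extend g) (V - {v}) = g" if "g \<in> PiE (V - {v}) (\<lambda>_. M)" for g
      using that by (auto simp: PiE_def extensional_def restrict_def)
    then show "inj_on ?extend (PiE (V - {v}) (\<lambda>_. M))"
      by (metis (no_types, lifting) inj_onI)
    show "?extend ` PiE (V - {v}) (\<lambda>_. M) \<subseteq> {f \<in> PiE V (\<lambda>_. M). f u = f v}"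
      using assms(3-5) by (auto simp: PiE_def extensional_def)
    show "finite {f \<in> PiE V (\<lambda>_. M). f u = f v}" using assms(1,2) by (simp add: finite_PiE)
  qed
  then show ?thesis using assms by (simp add: card_PiE)
qed

lemma card_PiE_two_diagonals_le:
  assumes "finite V" "finite M" "w \<in> V" "z \<in> V" "x \<in> V" "y \<in> V"
    and "w \<noteq> z" "x \<noteq> y" "w \<noteq> x" "w \<noteq> y"
  shows "card {f \<in> PiE V (\<lambda>_. M). f w = f z \<and> f x = f y} \<le> card M ^ (card V - 2)"
proof -
  let ?S = "{f \<in> PiE V (\<lambda>_. M). f w = f z \<and> f x = f y}"
  have "inj_on (\<lambda>f. restrict f V) ?S" by (rule inj_on_restrict_PiE) auto
  then have "inj_on (\<lambda>f. restrict f (V - {w})) ?S"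
    by (rule inj_on_restrict_Diff_singleton[where b = z]) (use assms in auto)
  then have "inj_on (\<lambda>f. restrict f (V - {w} - {y})) ?S"
    by (rule inj_on_restrict_Diff_singleton[where b = x]) (use assms in auto)
  then have "card ?S \<le> (\<Prod>a\<in>V - {w} - {y}. card M)"
    by (intro card_le_prod_card_if_inj_on_restrict[of _ V]) (use assms in auto)
  moreover have "card (V - {w} - {y}) = card V - 2" using assms by simp
  ultimately show ?thesis by simp
qed

lemma card_UN_ge_Bonferroni:
  fixes B :: "'k \<Rightarrow> 'x set"
  assumes "finite K" "\<And>k. k \<in> K \<Longrightarrow> finite (B k)"
  shows "(\<Sum>k\<in>K. real (card (B k))) - (\<Sum>k\<in>K. \<Sum>l\<in>K - {k}. real (card (B k \<inter> B l)))
           \<le> real (card (\<Union>k\<in>K. B k))"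
  using assms
proof (induction K rule: finite_induct)
  case empty
  then show ?case by simp
next
  case (insert a K)
  let ?U = "\<Union>k\<in>K. B k"
  let ?c = "\<lambda>k l. real (card (B k \<inter> B l))"
  have "card (B a \<inter> ?U) = card (\<Union>l\<in>K. B a \<inter> B l)" by (simp only: Int_UN_distrib)
  also have "\<dots> \<le> (\<Sum>l\<in>K. card (B a \<inter> B l))" by (rule card_UN_le[OF insert(1)])
  finally have overlap: "real (card (B a \<inter> ?U)) \<le> (\<Sum>l\<in>K. ?c a l)"
    by (metis of_nat_le_iff of_nat_sum)
  have "(\<Sum>k\<in>K. \<Sum>l\<in>K - {k}. ?c k l) \<le> (\<Sum>k\<in>K. \<Sum>l\<in>insert a K - {k}. ?c k l)"
    by (intro sum_mono sum_mono2) (use insert in auto)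
  moreover have "(\<Sum>k\<in>insert a K. \<Sum>l\<in>insert a K - {k}. ?c k l)
      = (\<Sum>l\<in>K. ?c a l) + (\<Sum>k\<in>K. \<Sum>l\<in>insert a K - {k}. ?c k l)"
    using insert by (simp add: insert_Diff_if)
  moreover have "real (card (B a \<union> ?U)) = real (card (B a)) + real (card ?U) - real (card (B a \<inter> ?U))"
    using card_Un_Int[of "B a" ?U] insert by simp
  ultimately show ?case using insert overlap by simp
qed

section \<open>The chromatic polynomial up to second order\<close>

text \<open>Each edge once, as a doubleton: \<open>E\<close> contains both orientations of an edge.\<close>

definition graph_edges :: "('a \<times> 'a) set \<Rightarrow> 'a set set" where
  "graph_edges E = {{u, v} | u v. (u, v) \<in> E}"

lemma doubleton_in_graph_edges: "(u, v) \<in> E \<Longrightarrow> {u, v} \<in> graph_edges E"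
  by (auto simp: graph_edges_def)

lemma graph_edgesE:
  assumes "simple_graph V E" "k \<in> graph_edges E"
  obtains u v where "k = {u, v}" "(u, v) \<in> E" "u \<in> V" "v \<in> V" "u \<noteq> v"
  using assms by (auto simp: graph_edges_def simple_graph_def irrefl_def) blast

lemma finite_graph_edges:
  assumes "simple_graph V E"
  shows "finite (graph_edges E)"
proof -
  have "finite E" using assms by (auto simp: simple_graph_def intro: finite_subset)
  moreover have "graph_edges E = (\<lambda>(u, v). {u, v}) ` E" by (auto simp: graph_edges_def)
  ultimately show ?thesis by simp
qed

lemma two_le_card_if_graph_edges_nonempty:
  assumes G: "simple_graph V E" and "graph_edges E \<noteq> {}"
  shows "2 \<le> card V"
proof -
  obtain u v where "u \<in> V" "v \<in> V" "u \<noteq> v"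
    using assms(2) graph_edgesE[OF G] by blast
  then have "card {u, v} \<le> card V" using G by (intro card_mono) (auto simp: simple_graph_def)
  then show ?thesis using \<open>u \<noteq> v\<close> by simp
qed

definition monochromatic_maps :: "'a set \<Rightarrow> 'c set \<Rightarrow> 'a set \<Rightarrow> ('a \<Rightarrow> 'c) set" where
  "monochromatic_maps V M k = {f \<in> PiE V (\<lambda>_. M). \<forall>x\<in>k. \<forall>y\<in>k. f x = f y}"

lemma monochromatic_maps_doubleton:
  "monochromatic_maps V M {u, v} = {f \<in> PiE V (\<lambda>_. M). f u = f v}"
  by (auto simp: monochromatic_maps_def)

lemma chrom_poly_eq_card_Diff_monochromatic_maps:
  "chrom_poly V E m
     = card (PiE V (\<lambda>_. {0..<m}) - (\<Union>k\<in>graph_edges E. monochromatic_maps V {0..<m} k))"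
proof -
  have "{f. f \<in> PiE V (\<lambda>_. {0..<m}) \<and> (\<forall>(u, v)\<in>E. f u \<noteq> f v)}
      = PiE V (\<lambda>_. {0..<m}) - (\<Union>k\<in>graph_edges E. monochromatic_maps V {0..<m} k)"
  proof (intro equalityI subsetI)
    fix f assume f: "f \<in> PiE V (\<lambda>_. {0..<m}) - (\<Union>k\<in>graph_edges E. monochromatic_maps V {0..<m} k)"
    have "f u \<noteq> f v" if "(u, v) \<in> E" for u v
      using f doubleton_in_graph_edges[OF that] by (auto simp: monochromatic_maps_doubleton)
    then show "f \<in> {f. f \<in> PiE V (\<lambda>_. {0..<m}) \<and> (\<forall>(u, v)\<in>E. f u \<noteq> f v)}" using f by auto
  qed (auto simp: monochromatic_maps_def graph_edges_def)
  then show ?thesis by (simp add: chrom_poly_def)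
qed

lemma card_monochromatic_maps_ge:
  assumes G: "simple_graph V E" and "finite M" and k: "k \<in> graph_edges E"
  shows "card M ^ (card V - 1) \<le> card (monochromatic_maps V M k)"
proof -
  obtain u v where "k = {u, v}" "u \<in> V" "v \<in> V" "u \<noteq> v" using graph_edgesE[OF G k] by metis
  moreover have "finite V" using G by (simp add: simple_graph_def)
  ultimately show ?thesis
    using card_PiE_diagonal_ge \<open>finite M\<close> by (simp add: monochromatic_maps_doubleton)
qed

lemma card_monochromatic_maps_Int_le:
  assumes G: "simple_graph V E" and "finite M"
    and k: "k \<in> graph_edges E" and l: "l \<in> graph_edges E" and "k \<noteq> l"
  shows "card (monochromatic_maps V M k \<inter> monochromatic_maps V M l) \<le> card M ^ (card V - 2)"
proof -
  have finV: "finite V" using G by (simp add: simple_graph_def)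
  obtain u v where uv: "k = {u, v}" "u \<in> V" "v \<in> V" "u \<noteq> v" using graph_edgesE[OF G k] by metis
  obtain x y where xy: "l = {x, y}" "x \<in> V" "y \<in> V" "x \<noteq> y" using graph_edgesE[OF G l] by metis
  have "\<not> k \<subseteq> l" using \<open>k \<noteq> l\<close> card_subset_eq[of l k] uv xy by auto
  then obtain w z where wz: "k = {w, z}" "w \<notin> l" "w \<noteq> z" "w \<in> V" "z \<in> V"
    using uv by auto
  have "monochromatic_maps V M k \<inter> monochromatic_maps V M l
      \<subseteq> {f \<in> PiE V (\<lambda>_. M). f w = f z \<and> f x = f y}"
    using wz xy by (auto simp: monochromatic_maps_def)
  then have "card (monochromatic_maps V M k \<inter> monochromatic_maps V M l)
      \<le> card {f \<in> PiE V (\<lambda>_. M). f w = f z \<and> f x = f y}"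
    by (intro card_mono) (simp_all add: finV \<open>finite M\<close> finite_PiE)
  also have "\<dots> \<le> card M ^ (card V - 2)"
    using card_PiE_two_diagonals_le[OF finV \<open>finite M\<close>, of w z x y] wz xy by auto
  finally show ?thesis .
qed

lemma chrom_poly_le:
  assumes G: "simple_graph V E"
  defines "e \<equiv> real (card (graph_edges E))"
  shows "real (chrom_poly V E m)
           \<le> real m ^ card V - e * real m ^ (card V - 1) + e\<^sup>2 * real m ^ (card V - 2)"
proof -
  let ?K = "graph_edges E"
  let ?F = "PiE V (\<lambda>_. {0..<m})"
  let ?B = "monochromatic_maps V {0..<m}"
  have finV: "finite V" and finK: "finite ?K"
    using G finite_graph_edges by (auto simp: simple_graph_def)
  have finF: "finite ?F" using finV by (simp add: finite_PiE)
  have BF: "(\<Union>k\<in>?K. ?B k) \<subseteq> ?F" by (auto simp: monochromatic_maps_def)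
  have "e * real m ^ (card V - 1) \<le> (\<Sum>k\<in>?K. real (card (?B k)))"
    using sum_mono[of ?K "\<lambda>_. real m ^ (card V - 1)" "\<lambda>k. real (card (?B k))"]
      card_monochromatic_maps_ge[OF G, of "{0..<m}"]
    by (simp add: e_def flip: of_nat_power)
  moreover have "(\<Sum>k\<in>?K. \<Sum>l\<in>?K - {k}. real (card (?B k \<inter> ?B l))) \<le> e\<^sup>2 * real m ^ (card V - 2)"
  proof -
    have "(\<Sum>k\<in>?K. \<Sum>l\<in>?K - {k}. real (card (?B k \<inter> ?B l)))
        \<le> (\<Sum>k\<in>?K. real (card (?K - {k})) * real m ^ (card V - 2))"
      using card_monochromatic_maps_Int_le[OF G, of "{0..<m}"]
      by (intro sum_mono sum_bounded_above) (auto simp flip: of_nat_power)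
    also have "\<dots> \<le> (\<Sum>k\<in>?K. e * real m ^ (card V - 2))"
      by (intro sum_mono mult_right_mono) (auto simp: e_def card_Diff1_le)
    finally show ?thesis by (simp add: e_def power2_eq_square)
  qed
  moreover have "(\<Sum>k\<in>?K. real (card (?B k))) - (\<Sum>k\<in>?K. \<Sum>l\<in>?K - {k}. real (card (?B k \<inter> ?B l)))
      \<le> real (card (\<Union>k\<in>?K. ?B k))"
    using finite_subset[OF _ finF] BF by (intro card_UN_ge_Bonferroni finK) auto
  moreover have "real (chrom_poly V E m) = real (card ?F) - real (card (\<Union>k\<in>?K. ?B k))"
    using BF finF
    by (simp add: chrom_poly_eq_card_Diff_monochromatic_maps card_Diff_subset finite_subset
        card_mono of_nat_diff)
  moreover have "card ?F = m ^ card V" using finV by (simp add: card_PiE)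
  ultimately show ?thesis by simp
qed

section \<open>DP-colourings of a cover\<close>

definition cover_colourings :: "'a set \<Rightarrow> ('a \<Rightarrow> 'b set) \<Rightarrow> ('b \<times> 'b) set \<Rightarrow> ('a \<Rightarrow> 'b) set" where
  "cover_colourings V L EH = {f \<in> PiE V L. \<forall>u\<in>V. \<forall>v\<in>V. u \<noteq> v \<longrightarrow> (f u, f v) \<notin> EH}"

text \<open>An independent set meets every clique \<open>L u\<close> at most once; having \<open>|V|\<close> elements, it
  meets each exactly once.\<close>

lemma independent_set_eq_image_cover_colouring:
  assumes C: "is_cover V E L VH EH" and finV: "finite V"
    and I: "I \<subseteq> VH" "\<And>x y. x \<in> I \<Longrightarrow> y \<in> I \<Longrightarrow> (x, y) \<notin> EH" "card I = card V"
  obtains f where "f \<in> cover_colourings V L EH" "I = f ` V"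
proof -
  have VH: "(\<Union>u\<in>V. L u) = VH"
    and clique: "\<And>u x y. u \<in> V \<Longrightarrow> x \<in> L u \<Longrightarrow> y \<in> L u \<Longrightarrow> x \<noteq> y \<Longrightarrow> (x, y) \<in> EH"
    using C by (auto simp: is_cover_def)
  have "\<forall>x\<in>I. \<exists>u\<in>V. x \<in> L u" using I(1) VH by blast
  then obtain owner where owner: "\<And>x. x \<in> I \<Longrightarrow> owner x \<in> V" "\<And>x. x \<in> I \<Longrightarrow> x \<in> L (owner x)"
    by (metis (no_types))
  have "inj_on owner I"
  proof (rule inj_onI, rule ccontr)
    fix x y assume "x \<in> I" "y \<in> I" "owner x = owner y" "x \<noteq> y"
    then have "(x, y) \<in> EH" using owner clique[of "owner x" x y] by metis
    then show False using I(2) \<open>x \<in> I\<close> \<open>y \<in> I\<close> by blast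
  qed
  moreover have "owner ` I = V"
  proof (rule card_subset_eq[OF finV])
    show "owner ` I \<subseteq> V" using owner by blast
    show "card (owner ` I) = card V" using \<open>inj_on owner I\<close> I(3) by (simp add: card_image)
  qed
  ultimately have bij: "bij_betw owner I V" by (simp add: bij_betw_def)
  define f where "f = restrict (inv_into I owner) V"
  have fI: "f u \<in> I" and owner_f: "owner (f u) = u" if "u \<in> V" for u
    using that \<open>owner ` I = V\<close> by (auto simp: f_def inv_into_into f_inv_into_f)
  show ?thesis
  proof
    show "I = f ` V"
      using bij_betw_imp_surj_on[OF bij_betw_inv_into[OF bij]] by (simp add: f_def)
    have "f u \<in> L u" if "u \<in> V" for u using owner(2)[OF fI[OF that]] owner_f[OF that] by simp
    then have "f \<in> PiE V L" by (simp add: f_def)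
    then show "f \<in> cover_colourings V L EH"
      using fI I(2) by (simp add: cover_colourings_def)
  qed
qed

lemma finite_cover_fibre:
  assumes "is_cover V E L VH EH" "u \<in> V"
  shows "finite (L u)"
  using assms finite_subset[of "L u" VH] by (auto simp: is_cover_def simple_graph_def)

lemma inj_on_cover_choice:
  assumes "is_cover V E L VH EH" "f \<in> PiE V L"
  shows "inj_on f V"
proof (rule inj_onI)
  fix u v assume uv: "u \<in> V" "v \<in> V" "f u = f v"
  then have "f u \<in> L u \<inter> L v" using assms(2) by (metis IntI PiE_mem)
  then show "u = v" using assms(1) uv(1,2) by (auto simp: is_cover_def)
qed

lemma image_cover_colouring_independent:
  assumes C: "is_cover V E L VH EH" and f: "f \<in> cover_colourings V L EH"
  shows "f ` V \<subseteq> VH" "\<And>x y. x \<in> f ` V \<Longrightarrow> y \<in> f ` V \<Longrightarrow> (x, y) \<notin> EH" "card (f ` V) = card V"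
proof -
  have fL: "f \<in> PiE V L" using f by (simp add: cover_colourings_def)
  show "f ` V \<subseteq> VH" using C fL by (auto simp: is_cover_def)
  show "card (f ` V) = card V" using card_image[OF inj_on_cover_choice[OF C fL]] .
  have "irrefl EH" using C by (simp add: is_cover_def simple_graph_def)
  then show "(x, y) \<notin> EH" if "x \<in> f ` V" "y \<in> f ` V" for x y
    using that f by (auto simp: cover_colourings_def irrefl_def) metis
qed

lemma inj_on_image_cover_colourings:
  assumes C: "is_cover V E L VH EH"
  shows "inj_on (\<lambda>f. f ` V) (cover_colourings V L EH)"
proof (rule inj_onI)
  fix f g assume f: "f \<in> cover_colourings V L EH" and g: "g \<in> cover_colourings V L EH"
    and eq: "f ` V = g ` V"
  have fL: "f \<in> PiE V L" and gL: "g \<in> PiE V L" using f g by (simp_all add: cover_colourings_def)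
  have "f u = g u" if u: "u \<in> V" for u
  proof -
    obtain v where v: "v \<in> V" "f u = g v" using eq u by (metis imageI imageE)
    have "g v \<in> L u \<inter> L v" using PiE_mem[OF fL u] PiE_mem[OF gL v(1)] v(2) by simp
    then have "u = v" using C u v(1) by (auto simp: is_cover_def)
    then show ?thesis using v by simp
  qed
  then show "f = g" by (rule PiE_ext[OF fL gL])
qed

lemma P_DP_cover_eq_card_cover_colourings:
  assumes C: "is_cover V E L VH EH" and finV: "finite V"
  shows "P_DP_cover V VH EH = card (cover_colourings V L EH)"
proof -
  let ?S = "{I. I \<subseteq> VH \<and> (\<forall>x\<in>I. \<forall>y\<in>I. (x, y) \<notin> EH) \<and> card I = card V}"
  have "(\<lambda>f. f ` V) ` cover_colourings V L EH = ?S"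
  proof (intro equalityI subsetI)
    fix I assume "I \<in> (\<lambda>f. f ` V) ` cover_colourings V L EH"
    then show "I \<in> ?S" using image_cover_colouring_independent[OF C] by blast
  next
    fix I assume "I \<in> ?S"
    then have "I \<subseteq> VH" "\<And>x y. x \<in> I \<Longrightarrow> y \<in> I \<Longrightarrow> (x, y) \<notin> EH" "card I = card V" by simp_all
    then obtain f where "f \<in> cover_colourings V L EH" "I = f ` V"
      by (rule independent_set_eq_image_cover_colouring[OF C finV])
    then show "I \<in> (\<lambda>f. f ` V) ` cover_colourings V L EH" by blast
  qed
  then have "bij_betw (\<lambda>f. f ` V) (cover_colourings V L EH) ?S"
    using inj_on_image_cover_colourings[OF C] by (simp add: bij_betw_def)
  then show ?thesis by (simp add: P_DP_cover_def bij_betw_same_card)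
qed

definition conflicting_choices ::
  "'a set \<Rightarrow> ('a \<Rightarrow> 'b set) \<Rightarrow> ('b \<times> 'b) set \<Rightarrow> 'a set \<Rightarrow> ('a \<Rightarrow> 'b) set" where
  "conflicting_choices V L EH k = {f \<in> PiE V L. \<exists>x\<in>k. \<exists>y\<in>k. (f x, f y) \<in> EH}"

lemma PiE_Diff_cover_colourings_subset:
  assumes C: "is_cover V E L VH EH"
  shows "PiE V L - cover_colourings V L EH \<subseteq> (\<Union>k\<in>graph_edges E. conflicting_choices V L EH k)"
proof
  fix f assume "f \<in> PiE V L - cover_colourings V L EH"
  then obtain u v where f: "f \<in> PiE V L" and uv: "u \<in> V" "v \<in> V" "(f u, f v) \<in> EH"
    by (auto simp: cover_colourings_def)
  then have "(f u, f v) \<in> edges_between EH (L u) (L v)" by (auto simp: edges_between_def)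
  then have "u = v \<or> (u, v) \<in> E" using C uv unfolding is_cover_def by blast
  moreover have "u \<noteq> v" using C uv by (auto simp: is_cover_def simple_graph_def irrefl_def)
  ultimately have "{u, v} \<in> graph_edges E" by (simp add: doubleton_in_graph_edges)
  moreover have "f \<in> conflicting_choices V L EH {u, v}" using f uv by (auto simp: conflicting_choices_def)
  ultimately show "f \<in> (\<Union>k\<in>graph_edges E. conflicting_choices V L EH k)" by blast
qed

text \<open>Since the edges between \<open>L u\<close> and \<open>L v\<close> form a matching, a conflicting choice is
  determined by its values off \<open>v\<close>.\<close>

lemma card_conflicting_choices_le:
  assumes G: "simple_graph V E" and C: "is_m_fold_cover V E m L VH EH" and k: "k \<in> graph_edges E"
  shows "card (conflicting_choices V L EH k) \<le> m ^ (card V - 1)"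
proof -
  let ?S = "conflicting_choices V L EH k"
  obtain u v where uv: "k = {u, v}" "(u, v) \<in> E" "u \<in> V" "v \<in> V" "u \<noteq> v"
    using graph_edgesE[OF G k] by metis
  have finV: "finite V" using G by (simp add: simple_graph_def)
  have cover: "is_cover V E L VH EH" and card_L: "\<And>a. a \<in> V \<Longrightarrow> card (L a) = m"
    using C by (auto simp: is_m_fold_cover_def)
  have "sym EH" "irrefl EH" using cover by (auto simp: is_cover_def simple_graph_def)
  then have edge: "(f u, f v) \<in> edges_between EH (L u) (L v)" if "f \<in> ?S" for f
    using that uv by (auto simp: conflicting_choices_def edges_between_def sym_def irrefl_def)
  have matching: "f v = g v" if "f \<in> ?S" "g \<in> ?S" "f u = g u" for f g
  proof -
    have "\<forall>(x1, y1)\<in>edges_between EH (L u) (L v). \<forall>(x2, y2)\<in>edges_between EH (L u) (L v).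
        x1 = x2 \<longleftrightarrow> y1 = y2"
      using cover uv unfolding is_cover_def by blast
    then show ?thesis using edge[OF that(1)] edge[OF that(2)] \<open>f u = g u\<close> by fastforce
  qed
  have "inj_on (\<lambda>f. restrict f V) ?S"
    by (rule inj_on_restrict_PiE) (auto simp: conflicting_choices_def)
  then have "inj_on (\<lambda>f. restrict f (V - {v})) ?S"
    by (rule inj_on_restrict_Diff_singleton[where b = u]) (use uv matching in auto)
  then have "card ?S \<le> (\<Prod>a\<in>V - {v}. card (L a))"
    by (intro card_le_prod_card_if_inj_on_restrict[of _ V])
      (use finV finite_cover_fibre[OF cover] in \<open>auto simp: conflicting_choices_def\<close>)
  also have "\<dots> = m ^ (card V - 1)" using finV \<open>v \<in> V\<close> card_L by simp
  finally show ?thesis .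
qed

lemma card_cover_colourings_ge:
  assumes G: "simple_graph V E" and C: "is_m_fold_cover V E m L VH EH"
  shows "real m ^ card V - real (card (graph_edges E)) * real m ^ (card V - 1)
           \<le> real (card (cover_colourings V L EH))"
proof -
  let ?K = "graph_edges E"
  let ?F = "PiE V L"
  let ?B = "conflicting_choices V L EH"
  have finV: "finite V" and finK: "finite ?K" using G finite_graph_edges by (auto simp: simple_graph_def)
  have cover: "is_cover V E L VH EH" and card_L: "\<And>a. a \<in> V \<Longrightarrow> card (L a) = m"
    using C by (auto simp: is_m_fold_cover_def)
  have finF: "finite ?F" using finV finite_cover_fibre[OF cover] by (simp add: finite_PiE)
  have "finite (\<Union>k\<in>?K. ?B k)"
    by (rule finite_subset[OF _ finF]) (auto simp: conflicting_choices_def)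
  then have "card (?F - cover_colourings V L EH) \<le> card (\<Union>k\<in>?K. ?B k)"
    using PiE_Diff_cover_colourings_subset[OF cover] by (rule card_mono)
  also have "\<dots> \<le> (\<Sum>k\<in>?K. card (?B k))" by (rule card_UN_le[OF finK])
  also have "\<dots> \<le> (\<Sum>k\<in>?K. m ^ (card V - 1))"
    using card_conflicting_choices_le[OF G C] by (rule sum_mono)
  finally have "card (?F - cover_colourings V L EH) \<le> card ?K * m ^ (card V - 1)" by simp
  moreover have "cover_colourings V L EH \<subseteq> ?F" by (auto simp: cover_colourings_def)
  then have "card ?F = card (cover_colourings V L EH) + card (?F - cover_colourings V L EH)"
    using card_Int_Diff[OF finF] by (metis Int_absorb1)
  ultimately have "card ?F \<le> card (cover_colourings V L EH) + card ?K * m ^ (card V - 1)" by linarith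
  then have "real (card ?F) \<le> real (card (cover_colourings V L EH)) + real (card ?K) * real m ^ (card V - 1)"
    by (metis of_nat_add of_nat_le_iff of_nat_mult of_nat_power)
  then show ?thesis using finV card_L by (simp add: card_PiE)
qed

text \<open>The cover whose colourings are the proper \<open>m\<close>-colourings of \<open>G\<close>.\<close>

definition canonical_cover_edges ::
  "'a set \<Rightarrow> ('a \<times> 'a) set \<Rightarrow> nat \<Rightarrow> (('a \<times> nat) \<times> ('a \<times> nat)) set" where
  "canonical_cover_edges V E m =
     {((u, i), (v, j)). u \<in> V \<and> v \<in> V \<and> i < m \<and> j < m \<and> ((u = v \<and> i \<noteq> j) \<or> ((u, v) \<in> E \<and> i = j))}"

lemma is_m_fold_cover_canonical:
  assumes G: "simple_graph V E"
  shows "is_m_fold_cover V E m (\<lambda>u. {u} \<times> {0..<m}) (V \<times> {0..<m}) (canonical_cover_edges V E m)"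
proof -
  have "finite V" "sym E" "irrefl E" using G by (auto simp: simple_graph_def)
  then have "simple_graph (V \<times> {0..<m}) (canonical_cover_edges V E m)"
    by (auto simp: simple_graph_def canonical_cover_edges_def sym_def irrefl_def)
  moreover have "\<forall>(u, v)\<in>E.
      \<forall>(x1, y1)\<in>edges_between (canonical_cover_edges V E m) ({u} \<times> {0..<m}) ({v} \<times> {0..<m}).
      \<forall>(x2, y2)\<in>edges_between (canonical_cover_edges V E m) ({u} \<times> {0..<m}) ({v} \<times> {0..<m}).
        x1 = x2 \<longleftrightarrow> y1 = y2"
    using \<open>irrefl E\<close> by (auto simp: edges_between_def canonical_cover_edges_def irrefl_def)
  ultimately show ?thesis
    by (auto simp: is_m_fold_cover_def is_cover_def edges_between_def canonical_cover_edges_def)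
qed

lemma canonical_cover_colouring_at:
  assumes "f \<in> cover_colourings V (\<lambda>u. {u} \<times> {0..<m}) EH" "u \<in> V"
  shows "f u = (u, snd (f u))" "snd (f u) < m"
proof -
  have "f \<in> PiE V (\<lambda>u. {u} \<times> {0..<m})" using assms(1) by (simp add: cover_colourings_def)
  then have "f u \<in> {u} \<times> {0..<m}" using assms(2) by (rule PiE_mem)
  then show "f u = (u, snd (f u))" "snd (f u) < m" by auto
qed

lemma card_cover_colourings_canonical_le:
  assumes G: "simple_graph V E"
  shows "card (cover_colourings V (\<lambda>u. {u} \<times> {0..<m}) (canonical_cover_edges V E m)) \<le> chrom_poly V E m"
proof -
  let ?C = "cover_colourings V (\<lambda>u. {u} \<times> {0..<m}) (canonical_cover_edges V E m)"
  let ?P = "{c. c \<in> V \<rightarrow>\<^sub>E {0..<m} \<and> (\<forall>(u, v)\<in>E. c u \<noteq> c v)}"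
  let ?colour = "\<lambda>f. restrict (snd \<circ> f) V"
  note f_at = canonical_cover_colouring_at
  have "inj_on ?colour ?C"
  proof (rule inj_onI)
    fix f g assume f: "f \<in> ?C" and g: "g \<in> ?C" and eq: "?colour f = ?colour g"
    have "f u = g u" if "u \<in> V" for u
      using f_at(1)[OF f that] f_at(1)[OF g that] fun_cong[OF eq, of u] that by simp
    then show "f = g"
      by (rule PiE_ext[of f V "\<lambda>u. {u} \<times> {0..<m}" g, rotated 2])
        (use f g in \<open>simp_all add: cover_colourings_def\<close>)
  qed
  moreover have "?colour ` ?C \<subseteq> ?P"
  proof
    fix c assume "c \<in> ?colour ` ?C"
    then obtain f where f: "f \<in> ?C" and c: "c = ?colour f" by blast
    have "c \<in> V \<rightarrow>\<^sub>E {0..<m}" using f_at(2)[OF f] by (simp add: c)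
    moreover have "c u \<noteq> c v" if uv: "(u, v) \<in> E" for u v
    proof
      assume "c u = c v"
      have "u \<in> V" "v \<in> V" "u \<noteq> v" using G uv by (auto simp: simple_graph_def irrefl_def)
      with \<open>c u = c v\<close> have "snd (f u) = snd (f v)" by (simp add: c)
      then have "(f u, f v) = ((u, snd (f u)), (v, snd (f u)))"
        using f_at(1)[OF f \<open>u \<in> V\<close>] f_at(1)[OF f \<open>v \<in> V\<close>] by simp
      moreover have "((u, snd (f u)), (v, snd (f u))) \<in> canonical_cover_edges V E m"
        using uv \<open>u \<in> V\<close> \<open>v \<in> V\<close> f_at(2)[OF f \<open>u \<in> V\<close>] by (simp add: canonical_cover_edges_def)
      ultimately have "(f u, f v) \<in> canonical_cover_edges V E m" by simp
      then show False using f \<open>u \<in> V\<close> \<open>v \<in> V\<close> \<open>u \<noteq> v\<close> by (simp add: cover_colourings_def)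
    qed
    ultimately show "c \<in> ?P" by blast
  qed
  moreover have "finite ?P"
    using G by (intro finite_subset[OF _ finite_PiE[of V "\<lambda>_. {0..<m}"]]) (auto simp: simple_graph_def)
  ultimately show ?thesis unfolding chrom_poly_def by (rule card_inj_on_le)
qed

lemma P_DP_le_chrom_poly:
  assumes G: "simple_graph V E"
  shows "P_DP V E m \<le> chrom_poly V E m"
proof -
  have "P_DP V E m \<le> P_DP_cover V (V \<times> {0..<m}) (canonical_cover_edges V E m)"
    unfolding P_DP_def using is_m_fold_cover_canonical[OF G, of m] by (intro cInf_lower) blast+
  also have "\<dots> = card (cover_colourings V (\<lambda>u. {u} \<times> {0..<m}) (canonical_cover_edges V E m))"
    using G is_m_fold_cover_canonical[OF G]
    by (intro P_DP_cover_eq_card_cover_colourings) (auto simp: is_m_fold_cover_def simple_graph_def)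
  also have "\<dots> \<le> chrom_poly V E m" by (rule card_cover_colourings_canonical_le[OF G])
  finally show ?thesis .
qed

lemma P_DP_attained:
  assumes G: "simple_graph V E"
  obtains L :: "'a \<Rightarrow> ('a \<times> nat) set" and VH EH
    where "is_m_fold_cover V E m L VH EH" "P_DP V E m = P_DP_cover V VH EH"
proof -
  let ?S = "{P_DP_cover V VH EH | (L :: 'a \<Rightarrow> ('a \<times> nat) set) VH EH. is_m_fold_cover V E m L VH EH}"
  have "?S \<noteq> {}" using is_m_fold_cover_canonical[OF G, of m] by blast
  then have "Inf ?S \<in> ?S" by (rule Inf_nat_def1)
  moreover have "P_DP V E m = Inf ?S" by (simp add: P_DP_def)
  ultimately show ?thesis using that by auto
qed

lemma P_DP_ge:
  assumes G: "simple_graph V E"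
  shows "real m ^ card V - real (card (graph_edges E)) * real m ^ (card V - 1) \<le> real (P_DP V E m)"
proof -
  obtain L :: "'a \<Rightarrow> ('a \<times> nat) set" and VH EH
    where C: "is_m_fold_cover V E m L VH EH" and P: "P_DP V E m = P_DP_cover V VH EH"
    using P_DP_attained[OF G] .
  have "P_DP_cover V VH EH = card (cover_colourings V L EH)"
    using C G by (intro P_DP_cover_eq_card_cover_colourings) (auto simp: is_m_fold_cover_def simple_graph_def)
  then show ?thesis using card_cover_colourings_ge[OF G C] P by simp
qed

theorem mainTheorem3:
  fixes V :: "'a set" and E :: "('a \<times> 'a) set"
  assumes "simple_graph V E"
  shows "(\<lambda>m::nat. real (chrom_poly V E m) - real (P_DP V E m))
           \<in> O(\<lambda>m. real m powr (real (card V) - 2))"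
proof -
  define e where "e = real (card (graph_edges E))"
  have diff: "0 \<le> real (chrom_poly V E m) - real (P_DP V E m)"
    "real (chrom_poly V E m) - real (P_DP V E m) \<le> e\<^sup>2 * real m ^ (card V - 2)" for m
    using P_DP_le_chrom_poly[OF assms, of m] chrom_poly_le[OF assms, of m] P_DP_ge[OF assms, of m]
    by (simp_all add: e_def)
  have "\<bar>real (chrom_poly V E m) - real (P_DP V E m)\<bar> \<le> e\<^sup>2 * real m powr (real (card V) - 2)"
    if "m \<ge> 1" for m
  proof (cases "e = 0")
    case True
    then show ?thesis using diff[of m] by simp
  next
    case False
    then have "graph_edges E \<noteq> {}" by (auto simp: e_def)
    then have "2 \<le> card V" by (rule two_le_card_if_graph_edges_nonempty[OF assms])
    then have "real m powr (real (card V) - 2) = real m ^ (card V - 2)"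
      using that by (simp add: powr_realpow [symmetric] of_nat_diff)
    then show ?thesis using diff[of m] by simp
  qed
  then show ?thesis
    by (intro bigoI[where c = "e\<^sup>2"] eventually_mono[OF eventually_ge_at_top[of 1]]) auto
qed

end
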